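(* Let $f,g\in H^2(\mathbb D)$ be such that $|g(x)|=|f(x)|$ for all $x\in(-1,1)$ and $|g(z)|=|f(z)|$ for all $z\in e^{i\theta}(-1,1)$, where $\theta\notin\pi\mathbb Q$. Then $g=cf$ for some $c\in\mathbb C$ with $|c|=1$.
   Context: $\mathbb D$ is the open unit disc and $H^2(\mathbb D)$ the Hardy space of holomorphic $F$ on $\mathbb D$ with $\sup_{0\le r<1}\frac1{2\pi}\int_{-\pi}^{\pi}|F(re^{i\theta})|^2\,\mathrm d\theta<\infty$. $e^{i\theta}(-1,1)=\{te^{i\theta}:t\in(-1,1)\}$. *)

theory Defs
  imports "HOL-Complex_Analysis.Complex_Analysis"
begin

definition hardy2 :: "(complex \<Rightarrow> complex) set" where
  "hardy2 = {F. F holomorphic_on ball 0 1 \<and>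
     (\<exists>B. \<forall>r. 0 \<le> r \<and> r < 1 \<longrightarrow>
        (1 / (2 * pi)) * integral {-pi..pi} (\<lambda>t. (cmod (F (of_real r * cis t)))\<^sup>2) \<le> B)}"

end

theory Submission
  imports Defs
begin

(* For a unit vector v, z \<mapsto> cnj (f (v^2 cnj z)) is holomorphic and equals cnj f on the
  diameter through v, so |g| = |f| there gives g g* = f f* on the whole disc, for the
  reflections in both diameters. Dividing the two identities shows that g/f is invariant
  under the composition of the two reflections, the rotation by \<rho> = e^{2i\<theta>}. Writing
  f = z^m F near 0 with F zero-free, H = g/F satisfies H(\<rho> z) = \<rho>^m H(z); as \<rho> is not a
  root of unity, all Taylor coefficients of H except the m-th vanish, so g = c f, and
  |c| = 1 is read off on the real diameter. *)

(* For u = v^2 with |v| = 1, this is the Schwarz reflection of f in the line through v. *)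
definition reflect :: "complex \<Rightarrow> (complex \<Rightarrow> complex) \<Rightarrow> complex \<Rightarrow> complex" where
  "reflect u f z = cnj (f (u * cnj z))"

lemma mult_mem_ball_0:
  fixes u w :: complex
  assumes "cmod u \<le> 1" "w \<in> ball 0 r"
  shows "u * w \<in> ball 0 r"
  using assms mult_left_le_one_le[of "cmod w" "cmod u"] by (simp add: norm_mult)

lemma reflect_holomorphic:
  assumes "f holomorphic_on ball 0 r" "cmod u \<le> 1"
  shows "reflect u f holomorphic_on ball 0 r"
proof -
  have "(\<lambda>z. f (u * z)) holomorphic_on cnj ` ball 0 r"
    by (rule holomorphic_on_compose_gen[where g=f and t="ball 0 r", unfolded o_def])
       (use assms mult_mem_ball_0 in \<open>auto intro!: holomorphic_intros\<close>)
  from holomorphic_on_compose_cnj_cnj[OF this open_ball] show ?thesis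
    by (simp add: reflect_def [abs_def] o_def)
qed

lemma holomorphic_mult_eq_0_imp_eq_0:
  assumes holf: "f holomorphic_on S" and holg: "g holomorphic_on S" and S: "open S" "connected S"
    and fg: "\<And>z. z \<in> S \<Longrightarrow> f z * g z = 0"
    and "\<beta> \<in> S" "f \<beta> \<noteq> 0" "z \<in> S"
  shows "g z = 0"
proof -
  define V where "V = S \<inter> f -` (- {0})"
  have "open V"
    using continuous_on_open_vimage[OF \<open>open S\<close>, of f] holomorphic_on_imp_continuous_on[OF holf]
    unfolding V_def by (metis Int_commute closed_singleton open_Compl)
  moreover have "\<beta> \<in> V" "V \<subseteq> S"
    using \<open>\<beta> \<in> S\<close> \<open>f \<beta> \<noteq> 0\<close> by (auto simp: V_def)
  moreover have "g w = 0" if "w \<in> V" for w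
    using fg that by (auto simp: V_def)
  ultimately show ?thesis
    using analytic_continuation_open[of V S g "\<lambda>_. 0"] holg S \<open>z \<in> S\<close> by auto
qed

lemma holomorphic_eq_0_if_eq_0_on_diameter:
  assumes holf: "f holomorphic_on ball 0 1" and u: "cmod u = 1"
    and diameter: "\<And>t::real. -1 < t \<Longrightarrow> t < 1 \<Longrightarrow> f (of_real t * u) = 0"
    and "z \<in> ball 0 1"
  shows "f z = 0"
proof (rule analytic_continuation[OF holf open_ball connected_ball])
  let ?U = "{of_real t * u | t. -1 < t \<and> t < 1}"
  show "?U \<subseteq> ball 0 1" using u by (auto simp: norm_mult)
  show "0 islimpt ?U"
  proof (rule islimpt_approachable[THEN iffD2], intro allI impI)
    fix e :: real assume "0 < e"
    define t where "t = min (e/2) (1/2)"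
    have t: "0 < t" "t < 1" "t < e" using \<open>0 < e\<close> by (auto simp: t_def)
    then have "of_real t * u \<in> ?U" by force
    moreover have "cmod (of_real t * u) = t" using t u by (simp add: norm_mult)
    ultimately show "\<exists>x'\<in>?U. x' \<noteq> 0 \<and> dist x' 0 < e" using t by force
  qed
qed (use diameter \<open>z \<in> ball 0 1\<close> in auto)

lemma reflect_product_eq_if_norm_eq_on_diameter:
  assumes holf: "f holomorphic_on ball 0 1" and holg: "g holomorphic_on ball 0 1"
    and v: "cmod v = 1"
    and norm_eq: "\<And>t::real. -1 < t \<Longrightarrow> t < 1 \<Longrightarrow> cmod (g (of_real t * v)) = cmod (f (of_real t * v))"
    and z: "z \<in> ball 0 1"
  shows "g z * reflect (v\<^sup>2) g z = f z * reflect (v\<^sup>2) f z"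
proof -
  have "cmod (v\<^sup>2) \<le> 1" using v by (simp add: norm_power)
  have "g z * reflect (v\<^sup>2) g z - f z * reflect (v\<^sup>2) f z = 0"
  proof (rule holomorphic_eq_0_if_eq_0_on_diameter[OF _ v _ z])
    show "(\<lambda>z. g z * reflect (v\<^sup>2) g z - f z * reflect (v\<^sup>2) f z) holomorphic_on ball 0 1"
      using holf holg reflect_holomorphic[OF _ \<open>cmod (v\<^sup>2) \<le> 1\<close>]
      by (intro holomorphic_intros) auto
    fix t :: real assume "-1 < t" "t < 1"
    let ?x = "of_real t * v"
    have "v\<^sup>2 * cnj ?x = ?x"
      using v complex_norm_square[of v] by (simp add: power2_eq_square algebra_simps)
    then have "reflect (v\<^sup>2) h ?x = cnj (h ?x)" for h
      unfolding reflect_def by (simp only:)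
    then show "g ?x * reflect (v\<^sup>2) g ?x - f ?x * reflect (v\<^sup>2) f ?x = 0"
      using norm_eq[OF \<open>-1 < t\<close> \<open>t < 1\<close>]
      by (simp flip: complex_norm_square)
  qed
  then show ?thesis by simp
qed

lemma rotation_identity_if_reflect_products_eq:
  assumes holf: "f holomorphic_on ball 0 1" and holg: "g holomorphic_on ball 0 1"
    and "cmod \<rho> \<le> 1" and \<beta>: "\<beta> \<in> ball 0 1" "f \<beta> * g \<beta> \<noteq> 0"
    and eq1: "\<And>z. z \<in> ball 0 1 \<Longrightarrow> g z * reflect 1 g z = f z * reflect 1 f z"
    and eq\<rho>: "\<And>z. z \<in> ball 0 1 \<Longrightarrow> g z * reflect \<rho> g z = f z * reflect \<rho> f z"
    and w: "w \<in> ball 0 1"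
  shows "g w * f (\<rho> * w) = f w * g (\<rho> * w)"
proof -
  define A where "A z = reflect 1 g z * reflect \<rho> f z - reflect 1 f z * reflect \<rho> g z" for z
  have "A holomorphic_on ball 0 1"
    unfolding A_def using holf holg reflect_holomorphic \<open>cmod \<rho> \<le> 1\<close>
    by (intro holomorphic_intros) auto
  moreover have "f z * g z * A z = 0" if "z \<in> ball 0 1" for z
  proof -
    have "f z * g z * A z = (f z * reflect \<rho> f z) * (g z * reflect 1 g z)
                             - (f z * reflect 1 f z) * (g z * reflect \<rho> g z)"
      by (simp add: A_def algebra_simps)
    also have "\<dots> = 0" using eq1[OF that] eq\<rho>[OF that] by simp
    finally show ?thesis .
  qed
  ultimately have "A (cnj w) = 0"
    using holomorphic_mult_eq_0_imp_eq_0[of "\<lambda>z. f z * g z" "ball 0 1" A \<beta> "cnj w"] holf holg \<beta> w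
    by (auto intro: holomorphic_intros)
  moreover have "A (cnj w) = cnj (g w * f (\<rho> * w) - f w * g (\<rho> * w))"
    by (simp add: A_def reflect_def)
  ultimately have "cnj (g w * f (\<rho> * w) - f w * g (\<rho> * w)) = 0"
    by (simp only:)
  then show ?thesis
    by (simp flip: complex_cnj_mult)
qed

lemma holomorphic_monomial_if_rotation_equivariant:
  assumes holH: "H holomorphic_on ball 0 r" and "cmod \<rho> \<le> 1" "inj (\<lambda>n. \<rho> ^ n)"
    and equiv: "\<And>w. w \<in> ball 0 r \<Longrightarrow> H (\<rho> * w) = \<rho> ^ m * H w"
    and w: "w \<in> ball 0 r"
  shows "H w = (deriv ^^ m) H 0 / fact m * w ^ m"
proof -
  have "0 < r" using w norm_ge_zero[of w] by (simp del: norm_ge_zero)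
  then have 0: "0 \<in> ball 0 r" by simp
  have coeff_0: "(deriv ^^ n) H 0 = 0" if "n \<noteq> m" for n
  proof -
    have "\<rho> ^ n * (deriv ^^ n) H 0 = (deriv ^^ n) (\<lambda>w. H (\<rho> * w)) 0"
      using higher_deriv_compose_linear[OF holH open_ball open_ball 0 mult_mem_ball_0[OF \<open>cmod \<rho> \<le> 1\<close>]]
      by simp
    also have "\<dots> = (deriv ^^ n) (\<lambda>w. \<rho> ^ m * H w) 0"
    proof (rule higher_deriv_cong_ev)
      show "\<forall>\<^sub>F w in nhds 0. H (\<rho> * w) = \<rho> ^ m * H w"
        unfolding eventually_nhds using equiv 0 by (intro exI[of _ "ball 0 r"]) auto
    qed simp
    also have "\<dots> = \<rho> ^ m * (deriv ^^ n) H 0"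
      by (rule higher_deriv_cmult[OF holH 0 open_ball])
    finally have "\<rho> ^ n * (deriv ^^ n) H 0 = \<rho> ^ m * (deriv ^^ n) H 0" .
    moreover have "\<rho> ^ n \<noteq> \<rho> ^ m"
      using injD[OF \<open>inj (\<lambda>n. \<rho> ^ n)\<close>, of n m] \<open>n \<noteq> m\<close> by blast
    ultimately show ?thesis by simp
  qed
  have "(\<lambda>n. (deriv ^^ n) H 0 / fact n * (w - 0) ^ n) sums H w"
    by (rule holomorphic_power_series[OF holH w])
  also have "(\<lambda>n. (deriv ^^ n) H 0 / fact n * (w - 0) ^ n)
               = (\<lambda>n. if n = m then (deriv ^^ n) H 0 / fact n * w ^ n else 0)"
    using coeff_0 by (intro ext) simp
  finally show ?thesis
    by (rule sums_unique2[OF _ sums_single])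
qed

lemma proportional_if_rotation_identity:
  assumes holf: "f holomorphic_on ball 0 1" and holg: "g holomorphic_on ball 0 1"
    and "cmod \<rho> \<le> 1" "inj (\<lambda>n. \<rho> ^ n)" and \<beta>: "\<beta> \<in> ball 0 1" "f \<beta> \<noteq> 0"
    and rot: "\<And>w. w \<in> ball 0 1 \<Longrightarrow> g w * f (\<rho> * w) = f w * g (\<rho> * w)"
  obtains c where "\<And>z. z \<in> ball 0 1 \<Longrightarrow> g z = c * f z"
proof -
  define F where "F = zor_poly f 0"
  define m where "m = nat (zorder f 0)"
  have "0 \<in> ball (0::complex) 1" "\<exists>w\<in>ball 0 1. f w \<noteq> 0"
    using \<beta> by auto
  from zorder_exist_zero[OF holf open_ball connected_ball this]
  obtain r where "0 < r" and r1: "cball 0 r \<subseteq> ball (0::complex) 1" and holF: "F holomorphic_on cball 0 r"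
    and fF: "\<And>w. w \<in> cball 0 r \<Longrightarrow> f w = F w * w ^ m \<and> F w \<noteq> 0"
    unfolding F_def m_def diff_zero by blast
  have ball_r: "ball 0 r \<subseteq> ball (0::complex) 1" using r1 by auto
  have \<rho>_r: "\<rho> * w \<in> ball 0 r" if "w \<in> ball 0 r" for w
    using mult_mem_ball_0[OF \<open>cmod \<rho> \<le> 1\<close> that] .
  define H where "H w = g w / F w" for w
  have holH: "H holomorphic_on ball 0 r"
    unfolding H_def using holomorphic_on_subset[OF holg ball_r] holomorphic_on_subset[OF holF] fF
    by (intro holomorphic_intros) auto
  have holH\<rho>: "(\<lambda>w. H (\<rho> * w)) holomorphic_on ball 0 r"
    by (rule holomorphic_on_compose_gen[where g=H and t="ball 0 r", unfolded o_def])
       (use holH \<rho>_r in \<open>auto intro: holomorphic_intros\<close>)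
  have punctured: "H (\<rho> * w) = \<rho> ^ m * H w" if "w \<in> ball 0 r - {0}" for w
  proof -
    have w: "w \<in> cball 0 r" "\<rho> * w \<in> cball 0 r" "w \<noteq> 0"
      using that \<rho>_r[of w] ball_subset_cball[of 0 r] by auto
    have f\<rho>w: "f (\<rho> * w) = F (\<rho> * w) * \<rho> ^ m * w ^ m"
      using fF[OF w(2)] by (simp add: power_mult_distrib)
    have fw: "f w = F w * w ^ m"
      using fF[OF w(1)] by simp
    have "g w * f (\<rho> * w) = f w * g (\<rho> * w)"
      using rot that ball_r by auto
    then have "g w * (F (\<rho> * w) * \<rho> ^ m * w ^ m) = (F w * w ^ m) * g (\<rho> * w)"
      by (simp only: f\<rho>w fw)
    moreover have "w ^ m \<noteq> 0" "F w \<noteq> 0" "F (\<rho> * w) \<noteq> 0"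
      using w fF by auto
    ultimately show ?thesis
      using w(3) unfolding H_def by (simp add: field_simps)
  qed
  have "ball (0::complex) r - {0} \<noteq> {}"
  proof -
    have "complex_of_real (r / 2) \<in> ball 0 r - {0}"
      using \<open>0 < r\<close> by simp
    then show ?thesis by blast
  qed
  moreover have "(\<lambda>w. \<rho> ^ m * H w) holomorphic_on ball 0 r"
    using holH by (intro holomorphic_intros)
  ultimately have equiv: "H (\<rho> * w) = \<rho> ^ m * H w" if "w \<in> ball 0 r" for w
    by (rule analytic_continuation_open[OF open_delete[OF open_ball] open_ball _ connected_ball
          Diff_subset holH\<rho> _ punctured that])
  define c where "c = (deriv ^^ m) H 0 / fact m"
  have near_0: "g w = c * f w" if "w \<in> ball 0 r" for w
  proof -
    have "H w = c * w ^ m"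
      using holomorphic_monomial_if_rotation_equivariant[OF holH \<open>cmod \<rho> \<le> 1\<close> \<open>inj (\<lambda>n. \<rho> ^ n)\<close> equiv that]
      by (simp add: c_def)
    moreover have "F w \<noteq> 0" "f w = F w * w ^ m"
      using fF[of w] that ball_subset_cball[of 0 r] by auto
    ultimately show ?thesis
      unfolding H_def by (simp add: field_simps)
  qed
  have holcf: "(\<lambda>z. c * f z) holomorphic_on ball 0 1"
    using holf by (intro holomorphic_intros)
  have "g z = c * f z" if "z \<in> ball 0 1" for z
    by (rule analytic_continuation_open[OF open_ball open_ball _ connected_ball ball_r holg holcf near_0 that])
       (use \<open>0 < r\<close> in auto)
  then show thesis using that by blast
qed

lemma inj_cis_power:
  assumes "\<alpha> / pi \<notin> \<rat>"
  shows "inj (\<lambda>n. cis \<alpha> ^ n)"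
proof (rule injI, rule ccontr)
  fix n m :: nat
  assume "cis \<alpha> ^ n = cis \<alpha> ^ m" "n \<noteq> m"
  then have "cis (real n * \<alpha>) = cis (real m * \<alpha>)"
    by (simp only: Complex.DeMoivre)
  then have "cis ((real n - real m) * \<alpha>) = 1"
    by (simp add: left_diff_distrib flip: cis_divide)
  then obtain k :: int where k: "(real n - real m) * \<alpha> = of_int (2 * k) * pi"
    by (auto simp: cis_conv_exp exp_eq_1)
  have "\<alpha> / pi = of_int (2 * k) / (real n - real m)"
    using k \<open>n \<noteq> m\<close> by (simp add: field_simps)
  also have "\<dots> \<in> \<rat>"
    by (metis Rats_diff Rats_divide Rats_of_int Rats_of_nat)
  finally show False
    using assms by simp
qed

lemma unimodular_multiple_if_norm_eq_on_two_diameters: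
  assumes holf: "f holomorphic_on ball 0 1" and holg: "g holomorphic_on ball 0 1"
    and v: "cmod v = 1" and inj: "inj (\<lambda>n. (v\<^sup>2) ^ n)"
    and on_real: "\<And>t::real. -1 < t \<Longrightarrow> t < 1 \<Longrightarrow> cmod (g (of_real t)) = cmod (f (of_real t))"
    and on_tilted: "\<And>t::real. -1 < t \<Longrightarrow> t < 1 \<Longrightarrow>
                      cmod (g (of_real t * v)) = cmod (f (of_real t * v))"
  obtains c where "cmod c = 1" "\<And>z. z \<in> ball 0 1 \<Longrightarrow> g z = c * f z"
proof (cases "\<exists>t. -1 < t \<and> t < 1 \<and> f (of_real t) \<noteq> 0")
  case False
  then have "f z = 0" "g z = 0" if "z \<in> ball 0 1" for z
    using holomorphic_eq_0_if_eq_0_on_diameter[OF holf, of 1 z]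
      holomorphic_eq_0_if_eq_0_on_diameter[OF holg, of 1 z] on_real that
    by auto
  then show thesis using that[of 1] by simp
next
  case True
  then obtain t where t: "-1 < t" "t < 1" "f (of_real t) \<noteq> 0" by blast
  then have t_disc: "of_real t \<in> ball (0::complex) 1" and "f (of_real t) * g (of_real t) \<noteq> 0"
    using on_real[OF t(1,2)] by auto
  have "cmod (v\<^sup>2) \<le> 1"
    using v by (simp add: norm_power)
  have "g z * reflect 1 g z = f z * reflect 1 f z" "g z * reflect (v\<^sup>2) g z = f z * reflect (v\<^sup>2) f z"
    if "z \<in> ball 0 1" for z
    using reflect_product_eq_if_norm_eq_on_diameter[OF holf holg, of 1 z]
      reflect_product_eq_if_norm_eq_on_diameter[OF holf holg v on_tilted that] on_real that
    by simp_all
  then have "g w * f (v\<^sup>2 * w) = f w * g (v\<^sup>2 * w)" if "w \<in> ball 0 1" for w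
    using rotation_identity_if_reflect_products_eq[OF holf holg \<open>cmod (v\<^sup>2) \<le> 1\<close> t_disc
        \<open>f (of_real t) * g (of_real t) \<noteq> 0\<close> _ _ that]
    by blast
  then obtain c where c: "\<And>z. z \<in> ball 0 1 \<Longrightarrow> g z = c * f z"
    using proportional_if_rotation_identity[OF holf holg \<open>cmod (v\<^sup>2) \<le> 1\<close> inj t_disc t(3)]
    by blast
  have "cmod (f (of_real t)) = cmod c * cmod (f (of_real t))"
    using on_real[OF t(1,2)] c[OF t_disc] by (simp add: norm_mult)
  then have "cmod c = 1"
    using t(3) by simp
  with c that show thesis by blast
qed

theorem lemma4p4:
  fixes f g :: "complex \<Rightarrow> complex" and \<theta> :: real
  assumes "f \<in> hardy2" and "g \<in> hardy2"
    and "\<And>x::real. -1 < x \<Longrightarrow> x < 1 \<Longrightarrow> cmod (g (of_real x)) = cmod (f (of_real x))"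
    and "\<And>t::real. -1 < t \<Longrightarrow> t < 1 \<Longrightarrow>
           cmod (g (of_real t * cis \<theta>)) = cmod (f (of_real t * cis \<theta>))"
    and "\<theta> / pi \<notin> \<rat>"
  shows "\<exists>c. cmod c = 1 \<and> (\<forall>z\<in>ball 0 1. g z = c * f z)"
proof -
  have holf: "f holomorphic_on ball 0 1" and holg: "g holomorphic_on ball 0 1"
    using assms(1,2) by (simp_all add: hardy2_def)
  have "(cis \<theta>)\<^sup>2 = cis (2 * \<theta>)"
    unfolding Complex.DeMoivre by simp
  moreover have "(2 * \<theta>) / pi \<notin> \<rat>"
    using assms(5) Rats_divide[of "2 * \<theta> / pi" 2] by auto
  ultimately have "inj (\<lambda>n. ((cis \<theta>)\<^sup>2) ^ n)"
    using inj_cis_power by simp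
  then obtain c where "cmod c = 1" "\<And>z. z \<in> ball 0 1 \<Longrightarrow> g z = c * f z"
    using unimodular_multiple_if_norm_eq_on_two_diameters[OF holf holg _ _ assms(3,4)] by auto
  then show ?thesis by blast
qed

end
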